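(* Let $n\ge 0$. Every cycle $C$ in the (unweighted) diamond graph $D_n$ is a principal cycle of some subdiamond of $D_n$. Moreover, every principal cycle of a subdiamond of height $2^t$ has length $2^{t+1}$.
   Context: Diamond graphs: $D_0$ consists of two vertices joined by an edge of length $1$; $D_n$ is obtained from $D_{n-1}$ by replacing every edge $uv$ by a quadrilateral $u,a,v,b$ with edges $ua,av,vb,bu$; all edges have length $1$ and $D_n$ carries its shortest-path metric. Call one vertex of $D_0$ the top and the other the bottom; the top (bottom) of $D_n$ is the vertex that evolved from the top (bottom) of $D_0$. A subdiamond of $D_n$ is a subgraph which evolved (through the successive replacements) from a single edge of some $D_k$, $0\le k\le n$. The top (bottom) of a subdiamond $S$ is its vertex closest to the top (bottom) of $D_n$; the height of $S$ is the distance between its top and bottom. When a subdiamond $S$ evolves from an edge $uv$, the first replacement step produces a quadrilateral $u,a,v,b$; the vertex of $S$ corresponding to $a$ is called the leftmost vertex and the one corresponding to $b$ the rightmost vertex of $S$. A principal cycle of $S$ is a cycle consisting of a path in $S$ from the top to the bottom of $S$ passing through the leftmost vertex together with a path in $S$ from the bottom to the top passing through the rightmost vertex. *)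

theory Defs
  imports Main
begin

text \<open>An edge of D_n is named by a word of length n
over the four letters below; the head of the word is the MOST RECENT replacement step.
Replacing the edge uv (u = top endpoint, v = bottom endpoint) by the quadrilateral
u,a,v,b produces the edges ua (UA), av (AV), ub (UB), bv (BV).  The new vertex a created
from the edge named w is  Mid w Lft  (leftmost vertex), b is  Mid w Rgt  (rightmost).\<close>

datatype quad = UA | AV | UB | BV
datatype side = Lft | Rgt
datatype dvert = Top | Bot | Mid "quad list" side

fun ends :: "quad list \<Rightarrow> dvert \<times> dvert" where
  "ends [] = (Top, Bot)"
| "ends (c # w) = (let (u, v) = ends w in
     (case c of UA \<Rightarrow> (u, Mid w Lft)
              | AV \<Rightarrow> (Mid w Lft, v)
              | UB \<Rightarrow> (u, Mid w Rgt)
              | BV \<Rightarrow> (Mid w Rgt, v)))"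

definition dedge :: "quad list \<Rightarrow> dvert set" where
  "dedge w = {fst (ends w), snd (ends w)}"

definition D_edges :: "nat \<Rightarrow> dvert set set" where
  "D_edges n = {dedge w | w. length w = n}"

text \<open>Subdiamonds of D_n: the subdiamond evolved from the edge w of D_k (k = length w \<le> n).\<close>
definition subdiamond :: "nat \<Rightarrow> quad list \<Rightarrow> bool" where
  "subdiamond n w \<longleftrightarrow> length w \<le> n"

definition sd_edges :: "nat \<Rightarrow> quad list \<Rightarrow> dvert set set" where
  "sd_edges n w = {dedge (u @ w) | u. length (u @ w) = n}"

definition sd_top :: "quad list \<Rightarrow> dvert" where
  "sd_top w = fst (ends w)"

definition sd_bot :: "quad list \<Rightarrow> dvert" where
  "sd_bot w = snd (ends w)"

definition sd_leftmost :: "quad list \<Rightarrow> dvert" where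
  "sd_leftmost w = Mid w Lft"

definition sd_rightmost :: "quad list \<Rightarrow> dvert" where
  "sd_rightmost w = Mid w Rgt"

definition is_walk :: "'a set set \<Rightarrow> 'a list \<Rightarrow> bool" where
  "is_walk E xs \<longleftrightarrow> xs \<noteq> [] \<and> (\<forall>i. Suc i < length xs \<longrightarrow> {xs ! i, xs ! Suc i} \<in> E)"

definition is_path :: "'a set set \<Rightarrow> 'a list \<Rightarrow> bool" where
  "is_path E xs \<longleftrightarrow> is_walk E xs \<and> distinct xs"

definition path_edges :: "'a list \<Rightarrow> 'a set set" where
  "path_edges xs = {{xs ! i, xs ! Suc i} | i. Suc i < length xs}"

definition is_cycle :: "'a set set \<Rightarrow> 'a list \<Rightarrow> bool" where
  "is_cycle E xs \<longleftrightarrow> length xs \<ge> 3 \<and> is_path E xs \<and> {last xs, hd xs} \<in> E"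

definition cyc_edges :: "'a list \<Rightarrow> 'a set set" where
  "cyc_edges xs = path_edges xs \<union> {{last xs, hd xs}}"

definition gdist :: "'a set set \<Rightarrow> 'a \<Rightarrow> 'a \<Rightarrow> nat" where
  "gdist E u v = (LEAST m. \<exists>xs. is_walk E xs \<and> hd xs = u \<and> last xs = v \<and> length xs = Suc m)"

definition height :: "nat \<Rightarrow> quad list \<Rightarrow> nat" where
  "height n w = gdist (D_edges n) (sd_top w) (sd_bot w)"

definition principal_cycle :: "nat \<Rightarrow> quad list \<Rightarrow> dvert set set \<Rightarrow> bool" where
  "principal_cycle n w C \<longleftrightarrow> subdiamond n w \<and>
     (\<exists>xs. is_cycle (D_edges n) xs \<and> C = cyc_edges xs) \<and>
     (\<exists>p1 p2. is_path (sd_edges n w) p1 \<and> hd p1 = sd_top w \<and> last p1 = sd_bot w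
              \<and> sd_leftmost w \<in> set p1
              \<and> is_path (sd_edges n w) p2 \<and> hd p2 = sd_bot w \<and> last p2 = sd_top w
              \<and> sd_rightmost w \<in> set p2
              \<and> C = path_edges p1 \<union> path_edges p2)"

end

theory Submission
  imports Defs Complex_Main
begin

text \<open>
Every edge of D_{n+1} joins a vertex of D_n to a new vertex \<open>Mid w s\<close>, which subdivides the
edge \<open>w\<close> of D_n. Hence a walk of D_{n+1} between old vertices alternates between old and new
vertices, and keeping only its entries at even positions contracts it to a walk of D_n through the
edges that its new vertices subdivide.

A cycle of D_{n+1}, rotated to start at an old vertex, contracts either to a single edge traversed
back and forth, and then it is the quadrilateral replacing that edge, or to a cycle of D_n. By
induction on n the latter is a principal cycle of some subdiamond, and re-inserting the new
vertices on the sides chosen by the original cycle lifts its two paths.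

For the lengths, the same contraction shows that a top-to-bottom path in the subdiamond evolved from
an edge of D_k has exactly 2^(n-k) edges, and that it stays in the left or right half of the
subdiamond as soon as it visits the leftmost or rightmost vertex; so the two paths of a principal
cycle are edge-disjoint. A vertical coordinate that changes by exactly 2^-n along every edge of D_n
shows that no top-to-bottom walk is shorter, so the height is 2^(n-k) as well.
\<close>

section \<open>Vertices and edges of the diamond graphs\<close>

fun D_vertex :: "nat \<Rightarrow> dvert \<Rightarrow> bool" where
  "D_vertex n Top \<longleftrightarrow> True"
| "D_vertex n Bot \<longleftrightarrow> True"
| "D_vertex n (Mid w s) \<longleftrightarrow> length w < n"

fun quad_side :: "quad \<Rightarrow> side" where
  "quad_side UA = Lft" | "quad_side AV = Lft" | "quad_side UB = Rgt" | "quad_side BV = Rgt"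

lemma ends_Cons:
  "ends (c # w) = (case c of UA \<Rightarrow> (fst (ends w), Mid w Lft) | AV \<Rightarrow> (Mid w Lft, snd (ends w))
     | UB \<Rightarrow> (fst (ends w), Mid w Rgt) | BV \<Rightarrow> (Mid w Rgt, snd (ends w)))"
  by (cases "ends w") (simp split: quad.split)

declare ends.simps(2) [simp del]

lemma D_vertex_mono: "D_vertex n x \<Longrightarrow> n \<le> m \<Longrightarrow> D_vertex m x"
  by (cases x) auto

lemma D_vertex_ends: "D_vertex (length w) (fst (ends w)) \<and> D_vertex (length w) (snd (ends w))"
  by (induction w) (auto simp: ends_Cons split: quad.split intro: D_vertex_mono)

lemma D_vertex_dedge: "x \<in> dedge w \<Longrightarrow> D_vertex (length w) x"
  using D_vertex_ends[of w] by (auto simp: dedge_def)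

lemma Mid_notin_dedge: "Mid w s \<notin> dedge w"
  using D_vertex_dedge by fastforce

lemma ends_ne_Mid [simp]:
  "fst (ends w) \<noteq> Mid w s" "snd (ends w) \<noteq> Mid w s" "Mid w s \<noteq> fst (ends w)" "Mid w s \<noteq> snd (ends w)"
  using Mid_notin_dedge[of w s] by (auto simp: dedge_def)

lemma ends_distinct: "fst (ends w) \<noteq> snd (ends w)"
proof (cases w)
  case (Cons c v)
  then show ?thesis
    by (cases c) (auto simp: ends_Cons)
qed simp

lemma dedge_Cons:
  "dedge (c # w) = {if c \<in> {UA, UB} then fst (ends w) else snd (ends w), Mid w (quad_side c)}"
  by (cases c) (auto simp: dedge_def ends_Cons)

lemma dedge_ConsE:
  obtains u where "u \<in> dedge w" "dedge (c # w) = {u, Mid w (quad_side c)}"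
proof
  show "(if c \<in> {UA, UB} then fst (ends w) else snd (ends w)) \<in> dedge w"
    by (simp add: dedge_def)
qed (rule dedge_Cons)

lemma ex_dedge_Cons_side: "x \<in> dedge w \<Longrightarrow> \<exists>c. quad_side c = s \<and> dedge (c # w) = {x, Mid w s}"
  by (cases s)
    (auto simp: dedge_def ends_Cons insert_commute intro: exI[of _ UA] exI[of _ AV] exI[of _ UB] exI[of _ BV])

lemma dedge_inj: "length w = length w' \<Longrightarrow> dedge w = dedge w' \<Longrightarrow> w = w'"
proof (induction w arbitrary: w')
  case (Cons c w)
  then obtain c' v where w': "w' = c' # v" and len: "length v = length w"
    by (cases w') auto
  obtain u where u: "u \<in> dedge v" "dedge (c' # v) = {u, Mid v (quad_side c')}"
    by (rule dedge_ConsE)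
  have "Mid w (quad_side c) \<in> dedge (c' # v)"
    using Cons.prems(2) w' by (auto simp: dedge_Cons)
  moreover have "Mid w (quad_side c) \<noteq> u"
    using D_vertex_dedge[OF u(1)] len by auto
  ultimately have "w = v" and side: "quad_side c = quad_side c'"
    using u(2) by auto
  then have "dedge (c # w) = dedge (c' # w)"
    using Cons.prems(2) w' by simp
  then have "c = c'"
    using side ends_distinct[of w] Mid_notin_dedge[of w]
    by (cases c; cases c') (auto simp: dedge_Cons doubleton_eq_iff)
  then show ?case
    using w' \<open>w = v\<close> by simp
qed simp

lemma dedge_eq_doubleton: "x \<in> dedge w \<Longrightarrow> y \<in> dedge w \<Longrightarrow> x \<noteq> y \<Longrightarrow> dedge w = {x, y}"
  by (auto simp: dedge_def)

lemma D_edges_SucE: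
  assumes "{x, y} \<in> D_edges (Suc n)"
  obtains w s where "length w = n" "x \<in> dedge w" "y = Mid w s"
  | w s where "length w = n" "y \<in> dedge w" "x = Mid w s"
proof -
  obtain c w where w: "length w = n" "{x, y} = dedge (c # w)"
    using assms by (auto simp: D_edges_def length_Suc_conv)
  obtain u where "u \<in> dedge w" "dedge (c # w) = {u, Mid w (quad_side c)}"
    by (rule dedge_ConsE)
  then show thesis
    using that w by (auto simp: doubleton_eq_iff)
qed

lemma D_vertex_edge_Suc_iff: "{x, y} \<in> D_edges (Suc n) \<Longrightarrow> D_vertex n x \<longleftrightarrow> \<not> D_vertex n y"
  by (erule D_edges_SucE) (auto dest: D_vertex_dedge)

lemma D_edges_Suc_newE:
  assumes "{x, y} \<in> D_edges (Suc n)" "\<not> D_vertex n y"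
  obtains w s where "length w = n" "x \<in> dedge w" "y = Mid w s"
  using assms by (elim D_edges_SucE) (auto dest: D_vertex_dedge)

definition mid_edges :: "quad list \<Rightarrow> side \<Rightarrow> dvert set set" where
  "mid_edges w s = (\<lambda>x. {x, Mid w s}) ` dedge w"

lemma mid_edges_dedge_Cons: "e \<in> mid_edges w s \<Longrightarrow> \<exists>c. quad_side c = s \<and> e = dedge (c # w)"
  unfolding mid_edges_def using ex_dedge_Cons_side by fastforce

lemma dedge_eq_top_bot: "dedge w = {sd_top w, sd_bot w}"
  by (simp add: dedge_def sd_top_def sd_bot_def)

lemma sd_top_ne_bot: "sd_top w \<noteq> sd_bot w"
  by (simp add: sd_top_def sd_bot_def ends_distinct)

lemma Mid_ne_sd_top_bot [simp]:
  "Mid w s \<noteq> sd_top w" "Mid w s \<noteq> sd_bot w" "sd_top w \<noteq> Mid w s" "sd_bot w \<noteq> Mid w s"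
  by (simp_all add: sd_top_def sd_bot_def)

lemma D_vertex_sd_top_bot: "length w \<le> n \<Longrightarrow> D_vertex n (sd_top w) \<and> D_vertex n (sd_bot w)"
  using D_vertex_ends[of w] D_vertex_mono by (auto simp: sd_top_def sd_bot_def)

section \<open>Walks, paths and cycles\<close>

lemma path_edges_Nil [simp]: "path_edges [] = {}"
  by (simp add: path_edges_def)

lemma path_edges_singleton [simp]: "path_edges [x] = {}"
  by (simp add: path_edges_def)

lemma path_edges_conv_image: "path_edges xs = (\<lambda>i. {xs ! i, xs ! Suc i}) ` {i. Suc i < length xs}"
  by (auto simp: path_edges_def)

lemma path_edges_Cons_Cons: "path_edges (x # y # r) = insert {x, y} (path_edges (y # r))"
proof -
  have "{i. Suc i < length (x # y # r)} = insert 0 (Suc ` {i. Suc i < length (y # r)})"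
    by (auto simp: less_Suc_eq_0_disj)
  then show ?thesis
    by (simp add: path_edges_conv_image image_image)
qed

lemma path_edges_Cons: "xs \<noteq> [] \<Longrightarrow> path_edges (x # xs) = insert {x, hd xs} (path_edges xs)"
  by (cases xs) (simp_all add: path_edges_Cons_Cons)

lemma path_edges_nthI: "Suc i < length xs \<Longrightarrow> {xs ! i, xs ! Suc i} \<in> path_edges xs"
  unfolding path_edges_def by blast

lemma path_edges_subset_set: "e \<in> path_edges xs \<Longrightarrow> e \<subseteq> set xs"
  by (auto simp: path_edges_def)

lemma finite_path_edges [simp]: "finite (path_edges xs)"
  unfolding path_edges_def by (rule finite_image_set, rule finite_subset[of _ "{..<length xs}"]) auto

lemma is_walk_iff: "is_walk E xs \<longleftrightarrow> xs \<noteq> [] \<and> path_edges xs \<subseteq> E"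
  by (auto simp: is_walk_def path_edges_def)

lemma is_walk_nth_edge: "is_walk E xs \<Longrightarrow> Suc i < length xs \<Longrightarrow> {xs ! i, xs ! Suc i} \<in> E"
  by (simp add: is_walk_def)

lemma set_subset_Union_path_edges: "2 \<le> length xs \<Longrightarrow> set xs \<subseteq> \<Union> (path_edges xs)"
proof
  fix x assume len: "2 \<le> length xs" and "x \<in> set xs"
  then obtain i where i: "i < length xs" "xs ! i = x"
    by (auto simp: in_set_conv_nth)
  show "x \<in> \<Union> (path_edges xs)"
  proof (cases "Suc i < length xs")
    case True
    then show ?thesis
      using i path_edges_nthI[of i xs] by blast
  next
    case False
    then have "Suc (i - 1) < length xs" "Suc (i - 1) = i"
      using i len by linarith+
    then have "{xs ! (i - 1), x} \<in> path_edges xs"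
      using i path_edges_nthI[of "i - 1" xs] by simp
    then show ?thesis
      by blast
  qed
qed

lemma length_le_2_if_path_edges_singleton:
  assumes "distinct xs" "path_edges xs \<subseteq> {{a, b}}"
  shows "length xs \<le> 2"
proof (rule ccontr)
  assume "\<not> length xs \<le> 2"
  then have "set xs \<subseteq> {a, b}"
    using set_subset_Union_path_edges[of xs] assms(2) by auto
  moreover have "card {a, b} \<le> 2"
    by (cases "a = b") simp_all
  ultimately have "card (set xs) \<le> 2"
    using card_mono[of "{a, b}" "set xs"] by simp
  with \<open>\<not> length xs \<le> 2\<close> show False
    using distinct_card[OF assms(1)] by simp
qed

lemma path_edges_snoc: "xs \<noteq> [] \<Longrightarrow> path_edges (xs @ [y]) = insert {last xs, y} (path_edges xs)"
proof (induction xs)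
  case (Cons x xs)
  then show ?case by (cases xs) (auto simp: path_edges_Cons_Cons)
qed simp

lemma path_edges_rev: "path_edges (rev xs) = path_edges xs"
proof (induction xs)
  case (Cons x xs)
  show ?case
  proof (cases "xs = []")
    case False
    have "path_edges (rev (x # xs)) = insert {last (rev xs), x} (path_edges (rev xs))"
      using path_edges_snoc[of "rev xs" x] False by simp
    then show ?thesis
      using Cons.IH False by (simp add: path_edges_Cons last_rev insert_commute)
  qed simp
qed simp

lemma is_path_rev: "is_path E xs \<Longrightarrow> is_path E (rev xs)"
  by (simp add: is_path_def is_walk_iff path_edges_rev)

lemma card_path_edges: "distinct xs \<Longrightarrow> card (path_edges xs) = length xs - 1"
proof (induction xs)
  case (Cons x xs)
  show ?case
  proof (cases xs)
    case (Cons y r)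
    then have "{x, y} \<notin> path_edges xs"
      using Cons.prems path_edges_subset_set by fastforce
    then show ?thesis
      using Cons.IH Cons.prems \<open>xs = y # r\<close> by (simp add: path_edges_Cons_Cons card_insert_disjoint)
  qed simp
qed simp

lemma path_edges_map_upt: "path_edges (map f [0..<Suc m]) = (\<lambda>i. {f i, f (Suc i)}) ` {..<m}"
proof (induction m)
  case (Suc m)
  have "map f [0..<Suc (Suc m)] = map f [0..<Suc m] @ [f (Suc m)]"
    by simp
  moreover have "last (map f [0..<Suc m]) = f m"
    by (simp add: last_map del: upt_Suc)
  ultimately show ?case
    using Suc.IH by (simp add: path_edges_snoc lessThan_Suc del: upt_Suc)
qed simp

lemma cyc_edges_conv_path_edges: "xs \<noteq> [] \<Longrightarrow> cyc_edges xs = path_edges (xs @ [hd xs])"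
  by (simp add: cyc_edges_def path_edges_snoc)

lemma is_cycle_iff: "is_cycle E xs \<longleftrightarrow> 3 \<le> length xs \<and> distinct xs \<and> cyc_edges xs \<subseteq> E"
  by (auto simp: is_cycle_def is_path_def is_walk_iff cyc_edges_def)

lemma card_cyc_edges:
  assumes "distinct xs" "3 \<le> length xs"
  shows "card (cyc_edges xs) = length xs"
proof -
  have "{last xs, hd xs} \<notin> path_edges xs"
  proof
    assume "{last xs, hd xs} \<in> path_edges xs"
    then obtain i where i: "Suc i < length xs" "{last xs, hd xs} = {xs ! i, xs ! Suc i}"
      by (auto simp: path_edges_def)
    have "xs \<noteq> []"
      using assms(2) by auto
    then have "last xs = xs ! (length xs - 1)" "hd xs = xs ! 0"
      by (simp_all add: last_conv_nth hd_conv_nth)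
    moreover have inj: "j = k" if "xs ! j = xs ! k" "j < length xs" "k < length xs" for j k
      using that nth_eq_iff_index_eq[OF assms(1)] by blast
    ultimately consider "xs ! (length xs - 1) = xs ! i" "xs ! 0 = xs ! Suc i"
      | "xs ! (length xs - 1) = xs ! Suc i" "xs ! 0 = xs ! i"
      using i(2) by (auto simp: doubleton_eq_iff)
    then show False
    proof cases
      case 1
      then show False using inj[of 0 "Suc i"] i(1) \<open>xs \<noteq> []\<close> by simp
    next
      case 2
      then show False using inj[of 0 i] inj[of "length xs - 1" "Suc i"] i(1) assms(2) \<open>xs \<noteq> []\<close> by simp
    qed
  qed
  then show ?thesis
    using assms card_path_edges[OF assms(1)] finite_path_edges by (simp add: cyc_edges_def)
qed

lemma cyc_edges_rotate1: "xs \<noteq> [] \<Longrightarrow> cyc_edges (rotate1 xs) = cyc_edges xs"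
proof (cases xs)
  case (Cons x r)
  show ?thesis
  proof (cases "r = []")
    case False
    have "cyc_edges (rotate1 xs) = path_edges ((r @ [x]) @ [hd r])"
      using Cons False by (simp add: cyc_edges_conv_path_edges)
    also have "\<dots> = insert {x, hd r} (path_edges (r @ [x]))"
      by (subst path_edges_snoc) simp_all
    also have "\<dots> = path_edges (x # r @ [x])"
      using False by (simp add: path_edges_Cons)
    also have "\<dots> = cyc_edges xs"
      using Cons by (simp add: cyc_edges_conv_path_edges)
    finally show ?thesis .
  qed (simp add: Cons)
qed simp

lemma is_cycle_rotate1:
  assumes "is_cycle E xs"
  shows "is_cycle E (rotate1 xs)"
proof -
  have "xs \<noteq> []"
    using assms by (auto simp: is_cycle_iff)
  then show ?thesis
    using assms by (simp add: is_cycle_iff cyc_edges_rotate1)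
qed

lemma inj_on_if_card_image_image: "finite A \<Longrightarrow> card (f ` g ` A) = card A \<Longrightarrow> inj_on g A"
  using card_image_le[of "g ` A" f] card_image_le[of A g] by (simp add: eq_card_imp_inj_on)

fun evens :: "'a list \<Rightarrow> 'a list" where
  "evens (x # y # r) = x # evens r"
| "evens xs = xs"

lemma length_evens: "length (evens xs) = (length xs + 1) div 2"
  by (induction xs rule: evens.induct) auto

lemma nth_evens: "i < length (evens xs) \<Longrightarrow> evens xs ! i = xs ! (2 * i)"
proof (induction xs arbitrary: i rule: evens.induct)
  case (1 x y r)
  then show ?case by (cases i) auto
qed auto

lemma hd_evens: "hd (evens xs) = hd xs"
  by (cases xs rule: evens.cases) auto

lemma evens_eq_Nil_iff [simp]: "evens xs = [] \<longleftrightarrow> xs = []"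
  by (cases xs rule: evens.cases) auto

lemma last_evens: "odd (length xs) \<Longrightarrow> last (evens xs) = last xs"
  by (induction xs rule: evens.induct) auto

lemma set_evens_subset: "set (evens xs) \<subseteq> set xs"
  by (induction xs rule: evens.induct) auto

lemma distinct_evens: "distinct xs \<Longrightarrow> distinct (evens xs)"
  by (induction xs rule: evens.induct) (auto dest: subsetD[OF set_evens_subset])

lemma nth_mem_evens: "even i \<Longrightarrow> i < length xs \<Longrightarrow> xs ! i \<in> set (evens xs)"
  using nth_evens[of "i div 2" xs] nth_mem[of "i div 2" "evens xs"]
  by (simp add: length_evens)

lemma evens_append: "even (length xs) \<Longrightarrow> evens (xs @ ys) = evens xs @ evens ys"
  by (induction xs rule: evens.induct) auto

lemma path_edges_evens:
  assumes "length xs = 2 * m + 1"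
  shows "path_edges (evens xs) = (\<lambda>i. {xs ! (2 * i), xs ! (2 * i + 2)}) ` {..<m}"
proof -
  have "evens xs = map (\<lambda>i. xs ! (2 * i)) [0..<Suc m]"
    using assms by (intro nth_equalityI) (simp_all add: length_evens nth_evens del: upt_Suc)
  then show ?thesis
    by (simp add: path_edges_map_upt del: upt_Suc)
qed

lemma path_edges_odd_length:
  assumes len: "length xs = 2 * m + 1"
  shows "path_edges xs = (\<Union>i<m. {{xs ! (2 * i), xs ! (2 * i + 1)}, {xs ! (2 * i + 1), xs ! (2 * i + 2)}})"
proof (rule set_eqI, rule iffI)
  fix e assume "e \<in> path_edges xs"
  then obtain j where j: "Suc j < length xs" "e = {xs ! j, xs ! Suc j}"
    by (auto simp: path_edges_def)
  show "e \<in> (\<Union>i<m. {{xs ! (2 * i), xs ! (2 * i + 1)}, {xs ! (2 * i + 1), xs ! (2 * i + 2)}})"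
  proof (cases "even j")
    case True
    then obtain i where "j = 2 * i" by blast
    then show ?thesis using j len by auto
  next
    case False
    then obtain i where "j = 2 * i + 1" by (blast elim: oddE)
    then show ?thesis using j len by (auto simp: numeral_2_eq_2)
  qed
next
  fix e assume "e \<in> (\<Union>i<m. {{xs ! (2 * i), xs ! (2 * i + 1)}, {xs ! (2 * i + 1), xs ! (2 * i + 2)}})"
  then obtain i where "i < m" "e = {xs ! (2 * i), xs ! Suc (2 * i)} \<or> e = {xs ! (2 * i + 1), xs ! Suc (2 * i + 1)}"
    by auto
  then show "e \<in> path_edges xs"
    using len path_edges_nthI[of "2 * i" xs] path_edges_nthI[of "2 * i + 1" xs] by auto
qed

fun subdivide :: "('a \<Rightarrow> 'a \<Rightarrow> 'a) \<Rightarrow> 'a list \<Rightarrow> 'a list" where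
  "subdivide f (x # y # r) = x # f x y # subdivide f (y # r)"
| "subdivide f xs = xs"

lemma subdivide_eq_Nil_iff [simp]: "subdivide f xs = [] \<longleftrightarrow> xs = []"
  by (cases "(f, xs)" rule: subdivide.cases) auto

lemma hd_subdivide: "hd (subdivide f xs) = hd xs"
  by (cases "(f, xs)" rule: subdivide.cases) auto

lemma last_subdivide: "last (subdivide f xs) = last xs"
  by (induction f xs rule: subdivide.induct) auto

lemma set_subset_set_subdivide: "set xs \<subseteq> set (subdivide f xs)"
  by (induction f xs rule: subdivide.induct) auto

lemma set_subdivide_subset: "set (subdivide f xs) \<subseteq> set xs \<union> {f x y | x y. {x, y} \<in> path_edges xs}"
  by (induction f xs rule: subdivide.induct) (simp_all add: path_edges_Cons_Cons, blast)

lemma distinct_subdivide: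
  assumes "distinct xs"
    and "\<And>x y. {x, y} \<in> path_edges xs \<Longrightarrow> f x y \<notin> set xs"
    and "\<And>x y x' y'. {x, y} \<in> path_edges xs \<Longrightarrow> {x', y'} \<in> path_edges xs \<Longrightarrow> f x y = f x' y'
           \<Longrightarrow> {x, y} = {x', y'}"
  shows "distinct (subdivide f xs)"
  using assms
proof (induction f xs rule: subdivide.induct)
  case (1 f x y r)
  let ?r = "subdivide f (y # r)"
  have edges: "path_edges (x # y # r) = insert {x, y} (path_edges (y # r))"
    by (rule path_edges_Cons_Cons)
  have IH: "distinct ?r"
    using 1 by (intro "1.IH") (auto simp: edges)
  have new: "f x y \<notin> set (x # y # r)"
    using "1.prems"(2) edges by blast
  have "x \<notin> set (y # r)"
    using "1.prems"(1) by simp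
  moreover have "x \<noteq> f a b" if "{a, b} \<in> path_edges (y # r)" for a b
    using "1.prems"(2)[of a b] that edges by auto
  ultimately have "x \<notin> set ?r"
    using set_subdivide_subset[of f "y # r"] by blast
  moreover have "f x y \<notin> set ?r"
  proof
    assume "f x y \<in> set ?r"
    then obtain a b where "{a, b} \<in> path_edges (y # r)" "f x y = f a b"
      using set_subdivide_subset[of f "y # r"] new by auto
    then have "{x, y} = {a, b}"
      using "1.prems"(3) edges by blast
    then have "x \<in> set (y # r)"
      using \<open>{a, b} \<in> path_edges (y # r)\<close> path_edges_subset_set by blast
    with "1.prems"(1) show False
      by simp
  qed
  ultimately show ?case
    using IH new by auto
qed auto

section \<open>Contracting walks of the next diamond graph\<close>

lemma D_vertex_of_path:
  assumes "path_edges xs \<subseteq> D_edges n" "2 \<le> length xs" "z \<in> set xs"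
  shows "D_vertex n z"
proof -
  obtain e where "e \<in> path_edges xs" "z \<in> e"
    using set_subset_Union_path_edges[OF assms(2)] assms(3) by blast
  then obtain w where "length w = n" "z \<in> dedge w"
    using assms(1) by (auto simp: D_edges_def)
  then show ?thesis
    using D_vertex_dedge by blast
qed

lemma walk_D_vertex_iff_even:
  assumes walk: "is_walk (D_edges (Suc n)) p" and hd: "D_vertex n (hd p)"
  shows "i < length p \<Longrightarrow> D_vertex n (p ! i) \<longleftrightarrow> even i"
proof (induction i)
  case 0
  then show ?case using hd by (simp add: hd_conv_nth)
next
  case (Suc i)
  have "D_vertex n (p ! i) \<longleftrightarrow> \<not> D_vertex n (p ! Suc i)"
    using walk Suc.prems by (intro D_vertex_edge_Suc_iff is_walk_nth_edge)
  with Suc show ?case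
    by auto
qed

lemma walk_contract:
  assumes walk: "is_walk (D_edges (Suc n)) p"
    and ends: "D_vertex n (hd p)" "D_vertex n (last p)"
    and no_return: "\<And>i. Suc (Suc i) < length p \<Longrightarrow> p ! i \<noteq> p ! Suc (Suc i)"
  obtains m W S where "length p = 2 * m + 1"
    and "\<And>i. i < m \<Longrightarrow> length (W i) = n"
    and "\<And>i. i < m \<Longrightarrow> p ! (2 * i + 1) = Mid (W i) (S i) \<and> dedge (W i) = {p ! (2 * i), p ! (2 * i + 2)}"
proof -
  have "p \<noteq> []"
    using walk by (simp add: is_walk_def)
  then have "even (length p - 1)"
    using walk_D_vertex_iff_even[OF walk ends(1), of "length p - 1"] ends(2) by (simp add: last_conv_nth)
  then obtain m where "length p - 1 = 2 * m"
    by (rule evenE)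
  with \<open>p \<noteq> []\<close> have m: "length p = 2 * m + 1"
    by (cases p) simp_all
  define W where "W i = (case p ! (2 * i + 1) of Mid w s \<Rightarrow> w)" for i
  define S where "S i = (case p ! (2 * i + 1) of Mid w s \<Rightarrow> s)" for i
  have "length (W i) = n \<and> p ! (2 * i + 1) = Mid (W i) (S i) \<and> dedge (W i) = {p ! (2 * i), p ! (2 * i + 2)}"
    if i: "i < m" for i
  proof -
    have new: "\<not> D_vertex n (p ! (2 * i + 1))"
      using walk_D_vertex_iff_even[OF walk ends(1), of "2 * i + 1"] i m by simp
    have "{p ! (2 * i), p ! (2 * i + 1)} \<in> D_edges (Suc n)"
      using is_walk_nth_edge[OF walk, of "2 * i"] i m by simp
    then obtain w s where ws: "length w = n" "p ! (2 * i) \<in> dedge w" "p ! (2 * i + 1) = Mid w s"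
      using new by (rule D_edges_Suc_newE)
    have "{p ! (2 * i + 2), p ! (2 * i + 1)} \<in> D_edges (Suc n)"
      using is_walk_nth_edge[OF walk, of "2 * i + 1"] i m by (simp add: insert_commute)
    then obtain w' s' where "p ! (2 * i + 2) \<in> dedge w'" "p ! (2 * i + 1) = Mid w' s'"
      using new by (rule D_edges_Suc_newE)
    then have "p ! (2 * i + 2) \<in> dedge w"
      using ws by simp
    moreover have "p ! (2 * i) \<noteq> p ! (2 * i + 2)"
      using no_return[of "2 * i"] i m by simp
    ultimately show ?thesis
      using ws dedge_eq_doubleton by (simp add: W_def S_def)
  qed
  then show thesis
    using that[OF m] by blast
qed

lemma path_edges_contract:
  assumes len: "length p = 2 * m + 1"
    and mid: "\<And>i. i < m \<Longrightarrow> p ! (2 * i + 1) = Mid (W i) (S i) \<and> dedge (W i) = {p ! (2 * i), p ! (2 * i + 2)}"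
  shows "path_edges p = (\<Union>i<m. mid_edges (W i) (S i))"
    and "path_edges (evens p) = dedge ` W ` {..<m}"
proof -
  show "path_edges p = (\<Union>i<m. mid_edges (W i) (S i))"
    unfolding path_edges_odd_length[OF len]
    using mid by (intro SUP_cong) (auto simp: mid_edges_def insert_commute)
  show "path_edges (evens p) = dedge ` W ` {..<m}"
    unfolding path_edges_evens[OF len] image_image by (rule image_cong) (simp_all add: mid)
qed

section \<open>Top-to-bottom paths in a subdiamond\<close>

lemma sd_edges_subset_D_edges: "sd_edges n w \<subseteq> D_edges n"
  by (auto simp: sd_edges_def D_edges_def)

lemma sd_edges_self: "length w = n \<Longrightarrow> sd_edges n w = {dedge w}"
  by (auto simp: sd_edges_def)

lemma dedge_in_sd_edges_iff:
  assumes "length v = n"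
  shows "dedge v \<in> sd_edges n w \<longleftrightarrow> (\<exists>u. v = u @ w)"
proof
  assume "dedge v \<in> sd_edges n w"
  then obtain u where "dedge v = dedge (u @ w)" "length (u @ w) = n"
    by (auto simp: sd_edges_def)
  then have "v = u @ w"
    using assms by (intro dedge_inj) simp_all
  then show "\<exists>u. v = u @ w" ..
qed (use assms in \<open>auto simp: sd_edges_def\<close>)

lemma dedge_Cons_in_sd_edges:
  assumes "dedge v \<in> sd_edges n w" "length v = n"
  shows "dedge (c # v) \<in> sd_edges (Suc n) w"
proof -
  obtain u where "v = u @ w"
    using assms dedge_in_sd_edges_iff by blast
  then have "c # v = (c # u) @ w"
    by simp
  then show ?thesis
    using assms(2) by (subst dedge_in_sd_edges_iff) auto
qed

lemma dedge_in_sd_edges_if_Cons: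
  assumes "dedge (c # v) \<in> sd_edges (Suc n) w" "length v = n" "length w \<le> n"
  shows "dedge v \<in> sd_edges n w"
proof -
  obtain u where u: "c # v = u @ w"
    using assms(1,2) dedge_in_sd_edges_iff[of "c # v" "Suc n" w] by auto
  with assms(2,3) have "u \<noteq> []"
    by (metis Suc_n_not_le_n append_Nil length_Cons)
  with u have "v = tl u @ w"
    by (cases u) simp_all
  then show ?thesis
    using assms(2) dedge_in_sd_edges_iff by blast
qed

lemma mid_edges_subset_sd_edges:
  assumes "length w = n"
  shows "mid_edges w s \<subseteq> sd_edges (Suc n) w"
proof
  fix e assume "e \<in> mid_edges w s"
  then obtain c where "e = dedge (c # w)"
    using mid_edges_dedge_Cons by blast
  moreover have "dedge w \<in> sd_edges n w"
    using assms sd_edges_self by blast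
  ultimately show "e \<in> sd_edges (Suc n) w"
    using assms dedge_Cons_in_sd_edges by blast
qed

definition half_edges :: "nat \<Rightarrow> quad list \<Rightarrow> side \<Rightarrow> dvert set set" where
  "half_edges n w s = (\<Union>c \<in> quad_side -` {s}. sd_edges n (c # w))"

lemma half_edges_disjoint: "half_edges n w Lft \<inter> half_edges n w Rgt = {}"
proof -
  have False if left: "e \<in> half_edges n w Lft" and right: "e \<in> half_edges n w Rgt" for e
  proof -
    obtain u c where c: "quad_side c = Lft" "e = dedge (u @ c # w)" "length (u @ c # w) = n"
      using left unfolding half_edges_def sd_edges_def by blast
    obtain u' c' where c': "quad_side c' = Rgt" "e = dedge (u' @ c' # w)" "length (u' @ c' # w) = n"
      using right unfolding half_edges_def sd_edges_def by blast
    from c c' have "u @ c # w = u' @ c' # w"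
      by (intro dedge_inj) simp_all
    then have "c = c'"
      using c(3) c'(3) by auto
    with c c' show False
      by simp
  qed
  then show ?thesis
    by blast
qed

lemma dedge_Cons_in_half_edges:
  "dedge v \<in> half_edges n w s \<Longrightarrow> length v = n \<Longrightarrow> dedge (c # v) \<in> half_edges (Suc n) w s"
  unfolding half_edges_def using dedge_Cons_in_sd_edges by blast

lemma mid_edges_subset_half_edges:
  assumes "length w = n"
  shows "mid_edges w s \<subseteq> half_edges (Suc n) w s"
proof
  fix e assume "e \<in> mid_edges w s"
  then obtain c where c: "quad_side c = s" "e = dedge (c # w)"
    using mid_edges_dedge_Cons by blast
  then have "e \<in> sd_edges (Suc n) (c # w)"
    using assms sd_edges_self[of "c # w"] by simp
  with c show "e \<in> half_edges (Suc n) w s"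
    unfolding half_edges_def by blast
qed

lemma sd_path_single_edge:
  assumes "length w = n" "is_path (sd_edges n w) p" "hd p = sd_top w" "last p = sd_bot w"
  shows "p = [sd_top w, sd_bot w]"
proof -
  have d: "distinct p" and ne: "p \<noteq> []" and sub: "path_edges p \<subseteq> {{sd_top w, sd_bot w}}"
    using assms(1,2) by (auto simp: is_path_def is_walk_iff sd_edges_self dedge_eq_top_bot)
  from ne obtain x r where p: "p = x # r"
    by (cases p) auto
  with assms(3,4) sd_top_ne_bot have "r \<noteq> []"
    by auto
  moreover have "length p \<le> 2"
    by (rule length_le_2_if_path_edges_singleton[OF d sub])
  ultimately obtain y where "r = [y]"
    using p by (cases r) auto
  then show ?thesis
    using p assms(3,4) by simp
qed

lemma sd_path_contract:
  assumes lw: "length w \<le> n" and path: "is_path (sd_edges (Suc n) w) p"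
    and hd: "hd p = sd_top w" and last: "last p = sd_bot w"
  obtains m W S where "length p = 2 * m + 1"
    and "\<And>i. i < m \<Longrightarrow> length (W i) = n"
    and "\<And>i. i < m \<Longrightarrow> p ! (2 * i + 1) = Mid (W i) (S i) \<and> dedge (W i) = {p ! (2 * i), p ! (2 * i + 2)}"
    and "is_path (sd_edges n w) (evens p)"
proof -
  have walk: "is_walk (D_edges (Suc n)) p" and d: "distinct p" and sub: "path_edges p \<subseteq> sd_edges (Suc n) w"
    using path sd_edges_subset_D_edges by (auto simp: is_path_def is_walk_iff)
  have ends_old: "D_vertex n (hd p)" "D_vertex n (last p)"
    using hd last D_vertex_sd_top_bot[OF lw] by simp_all
  have no_return: "p ! i \<noteq> p ! Suc (Suc i)" if "Suc (Suc i) < length p" for i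
    using that d by (simp add: nth_eq_iff_index_eq)
  obtain m W S where len: "length p = 2 * m + 1" and W: "\<And>i. i < m \<Longrightarrow> length (W i) = n"
    and WS: "\<And>i. i < m \<Longrightarrow> p ! (2 * i + 1) = Mid (W i) (S i) \<and> dedge (W i) = {p ! (2 * i), p ! (2 * i + 2)}"
    using walk_contract[OF walk ends_old no_return] by blast
  note contract = path_edges_contract[OF len WS]
  have "path_edges (evens p) \<subseteq> sd_edges n w"
  proof
    fix e assume "e \<in> path_edges (evens p)"
    then obtain i where i: "i < m" and e: "e = dedge (W i)"
      using contract(2) by auto
    have mid: "{sd_top (W i), Mid (W i) (S i)} \<in> mid_edges (W i) (S i)"
      by (simp add: mid_edges_def dedge_eq_top_bot)
    then obtain c where c: "{sd_top (W i), Mid (W i) (S i)} = dedge (c # W i)"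
      using mid_edges_dedge_Cons by blast
    have "{sd_top (W i), Mid (W i) (S i)} \<in> path_edges p"
      using contract(1) mid i by blast
    then have "dedge (c # W i) \<in> sd_edges (Suc n) w"
      using sub c by auto
    then show "e \<in> sd_edges n w"
      using e W[OF i] lw by (blast intro: dedge_in_sd_edges_if_Cons)
  qed
  then have "is_path (sd_edges n w) (evens p)"
    using distinct_evens[OF d] walk by (simp add: is_path_def is_walk_iff)
  with len W WS show thesis
    by (rule that)
qed

lemma sd_path_length:
  "length w \<le> n \<Longrightarrow> is_path (sd_edges n w) p \<Longrightarrow> hd p = sd_top w \<Longrightarrow> last p = sd_bot w
   \<Longrightarrow> length p = 2 ^ (n - length w) + 1"
proof (induction n arbitrary: p)
  case 0
  then show ?case
    using sd_path_single_edge[of w 0 p] by simp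
next
  case (Suc n)
  show ?case
  proof (cases "length w = Suc n")
    case True
    then show ?thesis
      using sd_path_single_edge[of w "Suc n" p] Suc.prems by simp
  next
    case False
    then have lw: "length w \<le> n"
      using Suc.prems(1) by simp
    obtain m W S where len: "length p = 2 * m + 1" and "\<And>i. i < m \<Longrightarrow> length (W i) = n"
      and "\<And>i. i < m \<Longrightarrow> p ! (2 * i + 1) = Mid (W i) (S i) \<and> dedge (W i) = {p ! (2 * i), p ! (2 * i + 2)}"
      and path: "is_path (sd_edges n w) (evens p)"
      using sd_path_contract[OF lw Suc.prems(2-4)] by blast
    have "length (evens p) = 2 ^ (n - length w) + 1"
      using Suc.IH[OF lw path] Suc.prems(3,4) len by (simp add: hd_evens last_evens)
    then have "m = 2 ^ (n - length w)"
      using len by (simp add: length_evens)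
    then show ?thesis
      using len lw by (simp add: Suc_diff_le)
  qed
qed

lemma sd_path_Suc_edges_eq_mid_edges:
  assumes lw: "length w = n" and path: "is_path (sd_edges (Suc n) w) p"
    and hd: "hd p = sd_top w" and last: "last p = sd_bot w" and mid: "Mid w s \<in> set p"
  shows "path_edges p = mid_edges w s"
proof -
  obtain m W S where len: "length p = 2 * m + 1" and W: "\<And>i. i < m \<Longrightarrow> length (W i) = n"
    and WS: "\<And>i. i < m \<Longrightarrow> p ! (2 * i + 1) = Mid (W i) (S i) \<and> dedge (W i) = {p ! (2 * i), p ! (2 * i + 2)}"
    and path': "is_path (sd_edges n w) (evens p)"
    using sd_path_contract[OF _ path hd last] lw by blast
  have "evens p = [sd_top w, sd_bot w]"
    using sd_path_single_edge[OF lw path'] hd last len by (simp add: hd_evens last_evens)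
  then have "length (evens p) = 2"
    by simp
  then have m: "m = 1"
    using len by (simp add: length_evens)
  have "p \<noteq> []"
    using len by auto
  then have "dedge (W 0) = {hd p, last p}"
    using WS[of 0] m len by (simp add: hd_conv_nth last_conv_nth numeral_2_eq_2)
  then have W0: "W 0 = w"
    using W[of 0] m lw hd last by (intro dedge_inj) (simp_all add: dedge_eq_top_bot)
  obtain j where j: "j < 3" "p ! j = Mid w s"
    using mid len m by (auto simp: in_set_conv_nth)
  have "p ! 0 \<in> dedge w" "p ! 2 \<in> dedge w"
    using WS[of 0] m W0 by (auto simp: numeral_2_eq_2)
  then have "j \<noteq> 0" "j \<noteq> 2"
    using j Mid_notin_dedge[of w s] by (metis)+
  then have "j = 1"
    using j(1) by arith
  then have "S 0 = s"
    using WS[of 0] j m W0 by simp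
  then show ?thesis
    using path_edges_contract(1)[OF len WS] m W0 by (simp add: lessThan_Suc)
qed

lemma sd_path_in_half_edges:
  "length w \<le> n \<Longrightarrow> is_path (sd_edges n w) p \<Longrightarrow> hd p = sd_top w \<Longrightarrow> last p = sd_bot w
   \<Longrightarrow> Mid w s \<in> set p \<Longrightarrow> path_edges p \<subseteq> half_edges n w s"
proof (induction n arbitrary: p)
  case 0
  then show ?case
    using sd_path_single_edge[of w 0 p] by simp
next
  case (Suc n)
  consider "length w = Suc n" | "length w = n" | "length w < n"
    using Suc.prems(1) by linarith
  then show ?case
  proof cases
    case 1
    then show ?thesis
      using sd_path_single_edge[of w "Suc n" p] Suc.prems by simp
  next
    case 2
    then show ?thesis
      using sd_path_Suc_edges_eq_mid_edges[OF 2 Suc.prems(2-5)] mid_edges_subset_half_edges by simp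
  next
    case 3
    then have lw: "length w \<le> n"
      by simp
    obtain m W S where len: "length p = 2 * m + 1" and W: "\<And>i. i < m \<Longrightarrow> length (W i) = n"
      and WS: "\<And>i. i < m \<Longrightarrow> p ! (2 * i + 1) = Mid (W i) (S i) \<and> dedge (W i) = {p ! (2 * i), p ! (2 * i + 2)}"
      and path: "is_path (sd_edges n w) (evens p)"
      using sd_path_contract[OF lw Suc.prems(2-4)] by blast
    obtain j where j: "j < length p" "p ! j = Mid w s"
      using Suc.prems(5) by (auto simp: in_set_conv_nth)
    have "is_walk (D_edges (Suc n)) p"
      using Suc.prems(2) sd_edges_subset_D_edges by (auto simp: is_path_def is_walk_iff)
    then have "even j"
      using walk_D_vertex_iff_even[of n p j] D_vertex_sd_top_bot[OF lw] Suc.prems(3) j 3 by simp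
    then have "Mid w s \<in> set (evens p)"
      using nth_mem_evens j by metis
    then have half: "path_edges (evens p) \<subseteq> half_edges n w s"
      using Suc.IH[OF lw path] Suc.prems(3,4) len by (simp add: hd_evens last_evens)
    show ?thesis
    proof
      fix e assume "e \<in> path_edges p"
      then obtain i where i: "i < m" and "e \<in> mid_edges (W i) (S i)"
        using path_edges_contract(1)[OF len WS] by blast
      then obtain c where c: "e = dedge (c # W i)"
        using mid_edges_dedge_Cons by blast
      have "dedge (W i) \<in> path_edges (evens p)"
        using path_edges_contract(2)[OF len WS] i by blast
      then show "e \<in> half_edges (Suc n) w s"
        using half c W[OF i] dedge_Cons_in_half_edges by blast
    qed
  qed
qed

section \<open>Heights and the length of principal cycles\<close>

fun span :: "quad list \<Rightarrow> real \<times> real" where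
  "span [] = (0, 1)"
| "span (c # w) = (if c \<in> {UA, UB} then (fst (span w), (fst (span w) + snd (span w)) / 2)
                   else ((fst (span w) + snd (span w)) / 2, snd (span w)))"

fun vpos :: "dvert \<Rightarrow> real" where
  "vpos Top = 0"
| "vpos Bot = 1"
| "vpos (Mid w s) = (fst (span w) + snd (span w)) / 2"

lemma span_ends: "span w = (vpos (fst (ends w)), vpos (snd (ends w)))"
proof (induction w)
  case (Cons c w)
  then show ?case by (cases c) (auto simp: ends_Cons)
qed simp

lemma span_length: "snd (span w) - fst (span w) = 1 / 2 ^ length w"
proof (induction w)
  case (Cons c w)
  then show ?case by (cases c) (auto simp: field_simps)
qed simp

lemma vpos_sd_bot_top: "vpos (sd_bot w) - vpos (sd_top w) = 1 / 2 ^ length w"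
  using span_length[of w] span_ends[of w] by (simp add: sd_top_def sd_bot_def)

lemma vpos_edge: "{x, y} \<in> D_edges n \<Longrightarrow> \<bar>vpos x - vpos y\<bar> = 1 / 2 ^ n"
  using vpos_sd_bot_top
  by (fastforce simp: D_edges_def dedge_eq_top_bot doubleton_eq_iff abs_minus_commute)

lemma vpos_walk:
  assumes "is_walk (D_edges n) xs"
  shows "i < length xs \<Longrightarrow> \<bar>vpos (xs ! i) - vpos (xs ! 0)\<bar> \<le> i / 2 ^ n"
proof (induction i)
  case (Suc i)
  have "\<bar>vpos (xs ! Suc i) - vpos (xs ! i)\<bar> = 1 / 2 ^ n"
    using vpos_edge[OF is_walk_nth_edge[OF assms Suc.prems]] by (simp add: abs_minus_commute)
  with Suc show ?case
    by (simp add: add_divide_distrib)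
qed simp

lemma walk_top_bot_length_gt:
  assumes "is_walk (D_edges n) xs" "hd xs = sd_top w" "last xs = sd_bot w" "length w \<le> n"
  shows "2 ^ (n - length w) < length xs"
proof -
  define m where "m = length xs - 1"
  have "xs \<noteq> []"
    using assms(1) by (simp add: is_walk_def)
  then have m: "m < length xs" "xs ! m = sd_bot w" "xs ! 0 = sd_top w"
    using assms(2,3) by (simp_all add: m_def last_conv_nth hd_conv_nth)
  have "1 / 2 ^ length w \<le> real m / 2 ^ n"
    using vpos_walk[OF assms(1) m(1)] vpos_sd_bot_top[of w] m(2,3) by simp
  then have "2 ^ (n - length w) * 2 ^ length w \<le> real m * 2 ^ length w"
    using assms(4) by (simp add: field_simps flip: power_add)
  then have "2 ^ (n - length w) \<le> m"
    by (metis mult_le_cancel_right zero_less_power zero_less_numeral not_le of_nat_le_iff of_nat_numeral of_nat_power)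
  then show ?thesis
    using m(1) by (simp add: m_def)
qed

lemma height_eq_power:
  assumes "length w \<le> n" "is_path (sd_edges n w) p" "hd p = sd_top w" "last p = sd_bot w"
  shows "height n w = 2 ^ (n - length w)"
  unfolding height_def gdist_def
proof (rule Least_equality)
  have "is_walk (D_edges n) p"
    using assms(2) sd_edges_subset_D_edges by (auto simp: is_path_def is_walk_iff)
  then show "\<exists>xs. is_walk (D_edges n) xs \<and> hd xs = sd_top w \<and> last xs = sd_bot w
                \<and> length xs = Suc (2 ^ (n - length w))"
    using assms sd_path_length by fastforce
qed (use assms(1) walk_top_bot_length_gt in fastforce)

lemma principal_cycle_length_le: "principal_cycle n w C \<Longrightarrow> length w \<le> n"
  unfolding principal_cycle_def subdiamond_def by blast

theorem principal_cycle_card: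
  assumes "height n w = 2 ^ t" "principal_cycle n w C"
  shows "card C = 2 ^ (t + 1)"
proof -
  obtain p1 p2 where p1: "is_path (sd_edges n w) p1" "hd p1 = sd_top w" "last p1 = sd_bot w"
      "Mid w Lft \<in> set p1"
    and p2: "is_path (sd_edges n w) (rev p2)" "hd (rev p2) = sd_top w" "last (rev p2) = sd_bot w"
      "Mid w Rgt \<in> set (rev p2)"
    and C: "C = path_edges p1 \<union> path_edges (rev p2)"
    using assms(2) is_path_rev
    by (fastforce simp: principal_cycle_def sd_leftmost_def sd_rightmost_def hd_rev last_rev path_edges_rev
        dest: is_path_rev)
  have lw: "length w \<le> n"
    using assms(2) by (rule principal_cycle_length_le)
  have "t = n - length w"
    using assms(1) height_eq_power[OF lw p1(1-3)] by simp
  moreover have "card (path_edges p) = 2 ^ (n - length w)"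
    if "is_path (sd_edges n w) p" "hd p = sd_top w" "last p = sd_bot w" for p
    using card_path_edges[of p] sd_path_length[OF lw that] that(1) by (simp add: is_path_def)
  moreover have "path_edges p1 \<inter> path_edges (rev p2) = {}"
    using sd_path_in_half_edges[OF lw p1] sd_path_in_half_edges[OF lw p2] half_edges_disjoint by blast
  ultimately show ?thesis
    using p1 p2 C by (simp add: card_Un_disjoint)
qed

section \<open>Every cycle is principal\<close>

definition edge_word :: "nat \<Rightarrow> dvert set \<Rightarrow> quad list" where
  "edge_word n e = inv_into {w. length w = n} dedge e"

lemma edge_word_dedge: "length w = n \<Longrightarrow> edge_word n (dedge w) = w"
  unfolding edge_word_def by (rule inv_into_f_f) (auto simp: inj_on_def dedge_inj)

lemma edge_word: "e \<in> D_edges n \<Longrightarrow> length (edge_word n e) = n \<and> dedge (edge_word n e) = e"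
  by (auto simp: D_edges_def edge_word_dedge)

definition midpoint :: "nat \<Rightarrow> (quad list \<Rightarrow> side) \<Rightarrow> dvert \<Rightarrow> dvert \<Rightarrow> dvert" where
  "midpoint n \<sigma> x y = Mid (edge_word n {x, y}) (\<sigma> (edge_word n {x, y}))"

lemma path_edges_subdivide_midpoint:
  "path_edges xs \<subseteq> D_edges n \<Longrightarrow> path_edges (subdivide (midpoint n \<sigma>) xs)
     = (\<Union>e\<in>path_edges xs. mid_edges (edge_word n e) (\<sigma> (edge_word n e)))"
proof (induction "midpoint n \<sigma>" xs rule: subdivide.induct)
  case (1 x y r)
  let ?w = "edge_word n {x, y}"
  have "{x, y} \<in> D_edges n"
    using "1.prems" by (simp add: path_edges_Cons_Cons)
  then have "mid_edges ?w (\<sigma> ?w) = {{x, midpoint n \<sigma> x y}, {midpoint n \<sigma> x y, y}}"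
    using edge_word by (auto simp: mid_edges_def midpoint_def)
  then show ?case
    using "1" by (simp add: path_edges_Cons hd_subdivide path_edges_Cons_Cons insert_commute)
qed simp_all

lemma subdivide_sd_path:
  assumes path: "is_path (sd_edges n v) q"
  shows "is_path (sd_edges (Suc n) v) (subdivide (midpoint n \<sigma>) q)"
proof -
  have sub: "path_edges q \<subseteq> sd_edges n v" and d: "distinct q" and ne: "q \<noteq> []"
    using path by (auto simp: is_path_def is_walk_iff)
  then have D: "path_edges q \<subseteq> D_edges n"
    using sd_edges_subset_D_edges by blast
  have "path_edges (subdivide (midpoint n \<sigma>) q) \<subseteq> sd_edges (Suc n) v"
  proof
    fix e assume "e \<in> path_edges (subdivide (midpoint n \<sigma>) q)"
    then obtain e' where e': "e' \<in> path_edges q" "e \<in> mid_edges (edge_word n e') (\<sigma> (edge_word n e'))"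
      using path_edges_subdivide_midpoint[OF D] by blast
    then obtain c where c: "e = dedge (c # edge_word n e')"
      using mid_edges_dedge_Cons by blast
    have "e' \<in> D_edges n" "e' \<in> sd_edges n v"
      using e'(1) sub D by auto
    then have "dedge (edge_word n e') \<in> sd_edges n v" "length (edge_word n e') = n"
      using edge_word by auto
    then show "e \<in> sd_edges (Suc n) v"
      unfolding c by (rule dedge_Cons_in_sd_edges)
  qed
  moreover have "distinct (subdivide (midpoint n \<sigma>) q)"
  proof (rule distinct_subdivide[OF d])
    fix x y assume "{x, y} \<in> path_edges q"
    then have "2 \<le> length q" "length (edge_word n {x, y}) = n"
      using D edge_word by (auto simp: path_edges_def)
    then show "midpoint n \<sigma> x y \<notin> set q"
      using D_vertex_of_path[OF D] by (fastforce simp: midpoint_def)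
  next
    fix x y x' y' assume "{x, y} \<in> path_edges q" "{x', y'} \<in> path_edges q"
      and "midpoint n \<sigma> x y = midpoint n \<sigma> x' y'"
    then have "edge_word n {x, y} = edge_word n {x', y'}"
      by (simp add: midpoint_def)
    then show "{x, y} = {x', y'}"
      using edge_word \<open>{x, y} \<in> path_edges q\<close> \<open>{x', y'} \<in> path_edges q\<close> D by (metis subsetD)
  qed
  ultimately show ?thesis
    using ne by (simp add: is_path_def is_walk_iff)
qed

lemma principal_cycle_subdivide:
  assumes pc: "principal_cycle n v C" and cyc: "is_cycle (D_edges (Suc n)) xs"
    and edges: "cyc_edges xs = (\<Union>e\<in>C. mid_edges (edge_word n e) (\<sigma> (edge_word n e)))"
  shows "principal_cycle (Suc n) v (cyc_edges xs)"
proof -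
  obtain q1 q2 where q1: "is_path (sd_edges n v) q1" "hd q1 = sd_top v" "last q1 = sd_bot v"
      "sd_leftmost v \<in> set q1"
    and q2: "is_path (sd_edges n v) q2" "hd q2 = sd_bot v" "last q2 = sd_top v"
      "sd_rightmost v \<in> set q2"
    and C: "C = path_edges q1 \<union> path_edges q2"
    using pc unfolding principal_cycle_def by blast
  let ?p1 = "subdivide (midpoint n \<sigma>) q1" and ?p2 = "subdivide (midpoint n \<sigma>) q2"
  have "path_edges q1 \<subseteq> D_edges n" "path_edges q2 \<subseteq> D_edges n"
    using q1(1) q2(1) sd_edges_subset_D_edges[of n v] by (auto simp: is_path_def is_walk_iff)
  then have "cyc_edges xs = path_edges ?p1 \<union> path_edges ?p2"
    unfolding edges C by (simp add: path_edges_subdivide_midpoint)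
  moreover have "subdiamond (Suc n) v"
    using principal_cycle_length_le[OF pc] by (simp add: subdiamond_def)
  moreover have "is_path (sd_edges (Suc n) v) ?p1" "is_path (sd_edges (Suc n) v) ?p2"
    using q1(1) q2(1) by (simp_all add: subdivide_sd_path)
  moreover have "sd_leftmost v \<in> set ?p1" "sd_rightmost v \<in> set ?p2"
    using q1(4) q2(4) by (simp_all add: subsetD[OF set_subset_set_subdivide])
  moreover have "hd ?p1 = sd_top v" "last ?p1 = sd_bot v" "hd ?p2 = sd_bot v" "last ?p2 = sd_top v"
    using q1 q2 by (simp_all add: hd_subdivide last_subdivide)
  ultimately show ?thesis
    unfolding principal_cycle_def using cyc by blast
qed

lemma principal_cycle_quadrilateral:
  assumes lw: "length w = n" and cyc: "is_cycle (D_edges (Suc n)) xs"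
    and edges: "cyc_edges xs = mid_edges w Lft \<union> mid_edges w Rgt"
  shows "principal_cycle (Suc n) w (cyc_edges xs)"
proof -
  define p1 where "p1 = [sd_top w, Mid w Lft, sd_bot w]"
  define p2 where "p2 = [sd_bot w, Mid w Rgt, sd_top w]"
  have p: "path_edges p1 = mid_edges w Lft" "path_edges p2 = mid_edges w Rgt"
    by (auto simp: p1_def p2_def path_edges_Cons_Cons mid_edges_def dedge_eq_top_bot)
  show ?thesis
    unfolding principal_cycle_def
  proof (intro conjI exI)
    show "subdiamond (Suc n) w"
      using lw by (simp add: subdiamond_def)
    show "is_path (sd_edges (Suc n) w) p1" "is_path (sd_edges (Suc n) w) p2"
      using p mid_edges_subset_sd_edges[OF lw] sd_top_ne_bot[of w]
      by (auto simp: is_path_def is_walk_iff p1_def p2_def)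
    show "cyc_edges xs = path_edges p1 \<union> path_edges p2"
      using edges p by simp
  qed (use cyc in \<open>simp_all add: p1_def p2_def sd_leftmost_def sd_rightmost_def\<close>)
qed

lemma cycle_contract:
  assumes cyc: "is_cycle (D_edges (Suc n)) xs" and hd: "D_vertex n (hd xs)"
  obtains m W S where "length xs = 2 * m" "\<And>i. i < m \<Longrightarrow> length (W i) = n"
    and "\<And>i. i < m \<Longrightarrow> xs ! (2 * i + 1) = Mid (W i) (S i)"
    and "cyc_edges xs = (\<Union>i<m. mid_edges (W i) (S i))"
    and "cyc_edges (evens xs) = dedge ` W ` {..<m}"
proof -
  have len: "3 \<le> length xs" and d: "distinct xs" and sub: "cyc_edges xs \<subseteq> D_edges (Suc n)"
    using cyc by (auto simp: is_cycle_iff)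
  define zs where "zs = xs @ [hd xs]"
  have ne: "xs \<noteq> []"
    using len by auto
  then have zs: "path_edges zs = cyc_edges xs" "hd zs = hd xs" "last zs = hd xs"
    by (simp_all add: zs_def cyc_edges_conv_path_edges)
  then have walk: "is_walk (D_edges (Suc n)) zs"
    using sub by (simp add: is_walk_iff zs_def)
  have no_return: "zs ! i \<noteq> zs ! Suc (Suc i)" if "Suc (Suc i) < length zs" for i
  proof (cases "Suc (Suc i) < length xs")
    case True
    then show ?thesis
      using d by (simp add: zs_def nth_append nth_eq_iff_index_eq)
  next
    case False
    then have "Suc (Suc i) = length xs" "0 < i"
      using that len by (simp_all add: zs_def)
    then show ?thesis
      using d ne by (simp add: zs_def nth_append hd_conv_nth nth_eq_iff_index_eq)
  qed
  have "D_vertex n (hd zs)" "D_vertex n (last zs)"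
    using hd zs by simp_all
  then obtain m W S where lenz: "length zs = 2 * m + 1" and W: "\<And>i. i < m \<Longrightarrow> length (W i) = n"
    and WS: "\<And>i. i < m \<Longrightarrow> zs ! (2 * i + 1) = Mid (W i) (S i) \<and> dedge (W i) = {zs ! (2 * i), zs ! (2 * i + 2)}"
    using walk_contract[OF walk _ _ no_return] by blast
  have lenx: "length xs = 2 * m"
    using lenz by (simp add: zs_def)
  have "xs ! (2 * i + 1) = Mid (W i) (S i)" if "i < m" for i
    using WS[OF that] that lenx by (simp add: zs_def nth_append)
  moreover have "evens zs = evens xs @ [hd (evens xs)]"
    using lenx by (simp add: zs_def evens_append hd_evens)
  then have "cyc_edges (evens xs) = path_edges (evens zs)"
    using ne by (simp add: cyc_edges_conv_path_edges)
  ultimately show thesis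
    using that[OF lenx W] path_edges_contract[OF lenz WS] zs(1) by simp
qed

lemma cycle_is_principal_Suc:
  assumes IH: "\<And>ys. is_cycle (D_edges n) ys \<Longrightarrow> \<exists>w. principal_cycle n w (cyc_edges ys)"
    and cyc: "is_cycle (D_edges (Suc n)) xs" and hd: "D_vertex n (hd xs)"
  shows "\<exists>w. principal_cycle (Suc n) w (cyc_edges xs)"
proof -
  obtain m W S where lenx: "length xs = 2 * m" and W: "\<And>i. i < m \<Longrightarrow> length (W i) = n"
    and odd: "\<And>i. i < m \<Longrightarrow> xs ! (2 * i + 1) = Mid (W i) (S i)"
    and edges: "cyc_edges xs = (\<Union>i<m. mid_edges (W i) (S i))"
    and edges': "cyc_edges (evens xs) = dedge ` W ` {..<m}"
    using cycle_contract[OF cyc hd] by blast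
  have d: "distinct xs" and "3 \<le> length xs"
    using cyc by (auto simp: is_cycle_iff)
  have ys: "length (evens xs) = m" "distinct (evens xs)"
    using lenx distinct_evens[OF d] by (simp_all add: length_evens)
  consider "m = 2" | "3 \<le> m"
    using lenx \<open>3 \<le> length xs\<close> by linarith
  then show ?thesis
  proof cases
    case 1
    txt \<open>The contraction runs back and forth along one edge, which \<open>xs\<close> surrounds.\<close>
    obtain a b where "evens xs = [a, b]"
      using ys(1) 1 by (auto simp: length_Suc_conv numeral_2_eq_2)
    then have "{dedge (W 0), dedge (W 1)} = {{a, b}}"
      using edges' 1 by (simp add: cyc_edges_def path_edges_Cons_Cons insert_commute lessThan_nat_numeral lessThan_Suc)
    then have "W 1 = W 0"
      using W[of 0] W[of 1] 1 by (intro dedge_inj) auto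
    moreover have "xs ! 1 \<noteq> xs ! 3"
      using d lenx 1 by (simp add: nth_eq_iff_index_eq)
    ultimately have "S 0 \<noteq> S 1"
      using odd[of 0] odd[of 1] 1 by auto
    then have "cyc_edges xs = mid_edges (W 0) Lft \<union> mid_edges (W 0) Rgt"
      using edges 1 \<open>W 1 = W 0\<close> by (cases "S 0"; cases "S 1") (auto simp: lessThan_nat_numeral lessThan_Suc)
    then show ?thesis
      using principal_cycle_quadrilateral[OF W[of 0] cyc] 1 by auto
  next
    case 2
    have "cyc_edges (evens xs) \<subseteq> D_edges n"
      using edges' W by (auto simp: D_edges_def)
    then have "is_cycle (D_edges n) (evens xs)"
      using ys 2 by (simp add: is_cycle_iff)
    then obtain w where w: "principal_cycle n w (cyc_edges (evens xs))"
      using IH by blast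
    have "card (dedge ` W ` {..<m}) = card {..<m}"
      using card_cyc_edges[of "evens xs"] ys 2 edges' by simp
    then have inj: "inj_on W {..<m}"
      by (simp add: inj_on_if_card_image_image)
    txt \<open>Lifting the paths of \<open>w\<close> must pass each edge \<open>W i\<close> on the side \<open>S i\<close> used by \<open>xs\<close>.\<close>
    define \<sigma> where "\<sigma> = S \<circ> the_inv_into {..<m} W"
    have "cyc_edges xs = (\<Union>e\<in>cyc_edges (evens xs). mid_edges (edge_word n e) (\<sigma> (edge_word n e)))"
      unfolding edges edges' using W inj by (simp add: edge_word_dedge \<sigma>_def the_inv_into_f_f)
    then show ?thesis
      using principal_cycle_subdivide[OF w cyc] by blast
  qed
qed

lemma cycle_is_principal: "is_cycle (D_edges n) xs \<Longrightarrow> \<exists>w. principal_cycle n w (cyc_edges xs)"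
proof (induction n arbitrary: xs)
  case 0
  have "D_edges 0 = {{Top, Bot}}"
    by (auto simp: D_edges_def dedge_def)
  then have "length xs \<le> 2"
    using 0 by (intro length_le_2_if_path_edges_singleton) (auto simp: is_cycle_def is_path_def is_walk_iff)
  with 0 show ?case
    by (simp add: is_cycle_def)
next
  case (Suc n)
  show ?case
  proof (cases "D_vertex n (hd xs)")
    case True
    with Suc show ?thesis
      by (intro cycle_is_principal_Suc)
  next
    case False
    have "3 \<le> length xs"
      using Suc.prems by (simp add: is_cycle_def)
    then obtain x y r where xs: "xs = x # y # r"
      by (auto simp: numeral_3_eq_3 Suc_le_length_iff)
    then have "{x, y} \<in> D_edges (Suc n)"
      using Suc.prems by (auto simp: is_cycle_def is_path_def is_walk_iff path_edges_Cons_Cons)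
    with False xs have "D_vertex n (hd (rotate1 xs))"
      using D_vertex_edge_Suc_iff by simp
    then obtain w where "principal_cycle (Suc n) w (cyc_edges (rotate1 xs))"
      using cycle_is_principal_Suc[OF Suc.IH is_cycle_rotate1[OF Suc.prems]] by blast
    then show ?thesis
      using cyc_edges_rotate1[of xs] xs by auto
  qed
qed

theorem lemma2p3:
  fixes n :: nat
  shows "(\<forall>xs. is_cycle (D_edges n) xs \<longrightarrow>
            (\<exists>w. subdiamond n w \<and> principal_cycle n w (cyc_edges xs)))
       \<and> (\<forall>w t C. subdiamond n w \<and> height n w = 2 ^ t \<and> principal_cycle n w C
            \<longrightarrow> card C = 2 ^ (t + 1))"
proof (intro conjI allI impI)
  fix xs assume "is_cycle (D_edges n) xs"
  then obtain w where "principal_cycle n w (cyc_edges xs)"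
    using cycle_is_principal by blast
  then show "\<exists>w. subdiamond n w \<and> principal_cycle n w (cyc_edges xs)"
    using principal_cycle_length_le by (auto simp: subdiamond_def)
next
  fix w t C assume "subdiamond n w \<and> height n w = 2 ^ t \<and> principal_cycle n w C"
  then show "card C = 2 ^ (t + 1)"
    using principal_cycle_card by blast
qed

end
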